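(* Let $\mathcal{X},\mathcal{Y},\hat{\mathcal{X}}$ be finite sets with $T:=|\hat{\mathcal{X}}|$, let $p(y|x)p(x)$ be a joint distribution with $p(x)>0$ for all $x$, let $\beta>0$, and let $\big(p_\beta(y|\hat x),p_\beta(\hat x)\big)$ be an IB root at $\beta$ with no vanishing coordinates. Define the square matrix $S$ of order $T|\mathcal{Y}|$, with rows and columns indexed by pairs, by $$S_{(y,\hat x),(y',\hat x')}:=\sum_x p_\beta(x|\hat x)\Big[\beta\tfrac{p(y|x)}{p_\beta(y|\hat x)}+(1-2\beta)\Big]p(y'|x)\Big[\delta_{\hat x,\hat x'}-p_\beta(\hat x'|x)\Big].$$ Then $\dim\ker(I-S)=\dim\ker(I-J)$, where $J$ is the matrix defined in the context and $I$ denotes the identity of the respective order. Moreover, the map $\bm v=(v_{y,\hat x})_{y,\hat x}\mapsto(\bm v,\bm u)$ with $u_{\hat x}:=\frac{1-\beta}{\beta}\sum_y v_{y,\hat x}$ is a bijection from the set of left eigenvectors of $S$ for the eigenvalue $1$ (the left kernel of $I-S$) onto the left kernel of $I-J$.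
   Context: An IB root at $\beta$ is an encoder $p(\hat x|x)$, decoder $p(y|\hat x)$ and marginal $p(\hat x)$ with $p(\hat x|x)=\frac{p(\hat x)}{Z(x,\beta)}\exp\{-\beta D_{KL}[p(\cdot|x)\|p(\cdot|\hat x)]\}$, $Z(x,\beta)$ the normalizer, $p(y|\hat x)=\sum_x p(y|x)p(x|\hat x)$ where $p(x|\hat x)=p(\hat x|x)p(x)/p(\hat x)$, and $p(\hat x)=\sum_xp(\hat x|x)p(x)$; $p_\beta(\hat x|x)$, $p_\beta(x|\hat x)$ denote the encoder and inverse encoder of the given root; $\delta$ is the Kronecker delta. Define $A(\hat x,\hat x')=\sum_x p_\beta(\hat x'|x)p_\beta(x|\hat x)$, $B(\hat x,\hat x')_y=\sum_x p(y|x)p_\beta(\hat x'|x)p_\beta(x|\hat x)$, $C(\hat x,\hat x')_{y,y'}=\sum_x p(y|x)p(y'|x)p_\beta(\hat x'|x)p_\beta(x|\hat x)$. $J$ is the square matrix of order $T(|\mathcal{Y}|+1)$ with rows indexed by pairs $(y,\hat x)$ then indices $\hat x$, columns by $(y',\hat x')$ then $\hat x'$, with entries: row $(y,\hat x)$, column $(y',\hat x')$: $\beta\sum_{\hat x'',y''}(\delta_{\hat x'',\hat x'}-\delta_{\hat x,\hat x'})\big[1-\tfrac{\delta_{y'',y}}{p_\beta(y|\hat x)}\big]C(\hat x,\hat x'')_{y',y''}$; row $(y,\hat x)$, column $\hat x'$: $(1-\beta)\sum_{y''}\big[1-\tfrac{\delta_{y'',y}}{p_\beta(y|\hat x)}\big]B(\hat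 x,\hat x')_{y''}$; row $\hat x$, column $(y',\hat x')$: $\beta[\delta_{\hat x,\hat x'}p_\beta(y'|\hat x)-B(\hat x,\hat x')_{y'}]$; row $\hat x$, column $\hat x'$: $(1-\beta)[\delta_{\hat x,\hat x'}-A(\hat x,\hat x')]$. (This is the Jacobian of one Blahut–Arimoto IB iteration in log-decoder coordinates at the root.) The left kernel of a matrix $M$ is $\{\bm w:\bm w^{\top}M=0\}$. *)

theory Defs
  imports "HOL-Analysis.Analysis"
begin

text \<open>Types: 'x = source alphabet X, 'y = relevant alphabet Y,
 't = compressed alphabet Xhat (all finite, nonempty).
 pyx x y = p(y|x), px x = p(x); enc x t = p_beta(t|x); dec t y = p_beta(y|t);
 marg t = p_beta(t).\<close>

definition kron :: "'a \<Rightarrow> 'a \<Rightarrow> real" where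
  "kron a b = (if a = b then 1 else 0)"

definition KL :: "('y::finite \<Rightarrow> real) \<Rightarrow> ('y \<Rightarrow> real) \<Rightarrow> real" where
  "KL p q = (\<Sum>y\<in>UNIV. if p y = 0 then 0 else p y * ln (p y / q y))"

definition is_joint_distribution :: "('x::finite \<Rightarrow> 'y::finite \<Rightarrow> real) \<Rightarrow> ('x \<Rightarrow> real) \<Rightarrow> bool" where
  "is_joint_distribution pyx px \<longleftrightarrow>
     (\<forall>x. px x \<ge> 0) \<and> (\<Sum>x\<in>UNIV. px x) = 1 \<and>
     (\<forall>x y. pyx x y \<ge> 0) \<and> (\<forall>x. (\<Sum>y\<in>UNIV. pyx x y) = 1)"

definition inv_enc :: "('x::finite \<Rightarrow> real) \<Rightarrow> ('x \<Rightarrow> 't \<Rightarrow> real) \<Rightarrow> ('t \<Rightarrow> real) \<Rightarrow> 't \<Rightarrow> 'x \<Rightarrow> real" where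
  "inv_enc px enc marg t x = enc x t * px x / marg t"

definition IB_Z :: "real \<Rightarrow> ('x::finite \<Rightarrow> 'y::finite \<Rightarrow> real) \<Rightarrow> ('t::finite \<Rightarrow> 'y \<Rightarrow> real) \<Rightarrow> ('t \<Rightarrow> real) \<Rightarrow> 'x \<Rightarrow> real" where
  "IB_Z \<beta> pyx dec marg x = (\<Sum>t\<in>UNIV. marg t * exp (- \<beta> * KL (pyx x) (dec t)))"

definition is_IB_root :: "real \<Rightarrow> ('x::finite \<Rightarrow> 'y::finite \<Rightarrow> real) \<Rightarrow> ('x \<Rightarrow> real) \<Rightarrow>
   ('x \<Rightarrow> 't::finite \<Rightarrow> real) \<Rightarrow> ('t \<Rightarrow> 'y \<Rightarrow> real) \<Rightarrow> ('t \<Rightarrow> real) \<Rightarrow> bool" where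
  "is_IB_root \<beta> pyx px enc dec marg \<longleftrightarrow>
     (\<forall>x t. enc x t = marg t / IB_Z \<beta> pyx dec marg x * exp (- \<beta> * KL (pyx x) (dec t))) \<and>
     (\<forall>t y. dec t y = (\<Sum>x\<in>UNIV. pyx x y * inv_enc px enc marg t x)) \<and>
     (\<forall>t. marg t = (\<Sum>x\<in>UNIV. enc x t * px x))"

definition IB_A :: "('x::finite \<Rightarrow> real) \<Rightarrow> ('x \<Rightarrow> 't \<Rightarrow> real) \<Rightarrow> ('t \<Rightarrow> real) \<Rightarrow> 't \<Rightarrow> 't \<Rightarrow> real" where
  "IB_A px enc marg t t' = (\<Sum>x\<in>UNIV. enc x t' * inv_enc px enc marg t x)"

definition IB_B :: "('x::finite \<Rightarrow> 'y \<Rightarrow> real) \<Rightarrow> ('x \<Rightarrow> real) \<Rightarrow> ('x \<Rightarrow> 't \<Rightarrow> real) \<Rightarrow> ('t \<Rightarrow> real) \<Rightarrow> 't \<Rightarrow> 't \<Rightarrow> 'y \<Rightarrow> real" where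
  "IB_B pyx px enc marg t t' y = (\<Sum>x\<in>UNIV. pyx x y * enc x t' * inv_enc px enc marg t x)"

definition IB_C :: "('x::finite \<Rightarrow> 'y \<Rightarrow> real) \<Rightarrow> ('x \<Rightarrow> real) \<Rightarrow> ('x \<Rightarrow> 't \<Rightarrow> real) \<Rightarrow> ('t \<Rightarrow> real) \<Rightarrow> 't \<Rightarrow> 't \<Rightarrow> 'y \<Rightarrow> 'y \<Rightarrow> real" where
  "IB_C pyx px enc marg t t' y y' = (\<Sum>x\<in>UNIV. pyx x y * pyx x y' * enc x t' * inv_enc px enc marg t x)"

text \<open>The Jacobian J, indexed by ('y \<times> 't) + 't: Inl (y,t) are the pairs, Inr t the indices t.\<close>
definition IB_J :: "real \<Rightarrow> ('x::finite \<Rightarrow> 'y::finite \<Rightarrow> real) \<Rightarrow> ('x \<Rightarrow> real) \<Rightarrow>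
   ('x \<Rightarrow> 't::finite \<Rightarrow> real) \<Rightarrow> ('t \<Rightarrow> 'y \<Rightarrow> real) \<Rightarrow> ('t \<Rightarrow> real) \<Rightarrow> real^(('y \<times> 't) + 't)^(('y \<times> 't) + 't)" where
  "IB_J \<beta> pyx px enc dec marg = (\<chi> r c.
     (case r of
        Inl (y, t) \<Rightarrow>
          (case c of
             Inl (y', t') \<Rightarrow> \<beta> * (\<Sum>t''\<in>UNIV. \<Sum>y''\<in>UNIV.
                 (kron t'' t' - kron t t') * (1 - kron y'' y / dec t y) * IB_C pyx px enc marg t t'' y' y'')
           | Inr t' \<Rightarrow> (1 - \<beta>) * (\<Sum>y''\<in>UNIV. (1 - kron y'' y / dec t y) * IB_B pyx px enc marg t t' y''))
      | Inr t \<Rightarrow>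
          (case c of
             Inl (y', t') \<Rightarrow> \<beta> * (kron t t' * dec t y' - IB_B pyx px enc marg t t' y')
           | Inr t' \<Rightarrow> (1 - \<beta>) * (kron t t' - IB_A px enc marg t t'))))"

definition IB_S :: "real \<Rightarrow> ('x::finite \<Rightarrow> 'y::finite \<Rightarrow> real) \<Rightarrow> ('x \<Rightarrow> real) \<Rightarrow>
   ('x \<Rightarrow> 't::finite \<Rightarrow> real) \<Rightarrow> ('t \<Rightarrow> 'y \<Rightarrow> real) \<Rightarrow> ('t \<Rightarrow> real) \<Rightarrow> real^('y \<times> 't)^('y \<times> 't)" where
  "IB_S \<beta> pyx px enc dec marg = (\<chi> r c. case r of (y, t) \<Rightarrow> case c of (y', t') \<Rightarrow>
     (\<Sum>x\<in>UNIV. inv_enc px enc marg t x * (\<beta> * pyx x y / dec t y + (1 - 2 * \<beta>))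
        * pyx x y' * (kron t t' - enc x t')))"

definition right_kernel :: "real^'n^'m \<Rightarrow> (real^'n) set" where
  "right_kernel M = {v. M *v v = 0}"

definition left_kernel :: "real^'n^'m \<Rightarrow> (real^'m) set" where
  "left_kernel M = {w. w v* M = 0}"

definition extend_vec :: "real \<Rightarrow> real^('y::finite \<times> 't::finite) \<Rightarrow> real^(('y \<times> 't) + 't)" where
  "extend_vec \<beta> v = (\<chi> i. case i of Inl p \<Rightarrow> v $ p
                                   | Inr t \<Rightarrow> (1 - \<beta>) / \<beta> * (\<Sum>y\<in>UNIV. v $ (y, t)))"

end

theory Submission
  imports Defs
begin

text \<open>
  Write \<open>G(t,t',x) = p(x|t) (\<delta>(t,t') - p(t'|x))\<close>. Once the root equations are used,
  every entry of \<open>J\<close> is an \<open>x\<close>-average of \<open>G\<close>: rows \<open>(y,t)\<close> carry the weight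
  \<open>p(y|x)/p(y|t) - 1\<close>, rows \<open>t\<close> the weight \<open>1\<close>, columns \<open>(y',t')\<close> the factor
  \<open>\<beta> p(y'|x)\<close> and columns \<open>t'\<close> the factor \<open>1 - \<beta>\<close>. Summing out \<open>p(y'|x)\<close> gives
  \<open>\<beta> J(r,t') = (1 - \<beta>) \<Sum>y'. J(r,(y',t'))\<close> for every row \<open>r\<close>, so every row vector \<open>w J\<close>
  has the form \<open>(v, u)\<close> with \<open>u\<close> obtained from \<open>v\<close> as in the theorem; and
  \<open>J((y,t),q) + (1 - \<beta>)/\<beta> J(t,q) = S((y,t),q)\<close> for every pair column \<open>q\<close>. Together these
  make \<open>v \<mapsto> (v, u)\<close> a bijection between the left fixed vectors of \<open>S\<close> and of \<open>J\<close>, and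
  rank-nullity transfers the equality of dimensions from left to right kernels.
\<close>

lemma right_kernel_eq_orthogonal_rows:
  fixes M :: "real^'n^'m"
  shows "right_kernel M = {y. \<forall>x \<in> span (rows M). orthogonal x y}"
proof (intro set_eqI iffI)
  fix y assume "y \<in> right_kernel M"
  then show "y \<in> {y. \<forall>x \<in> span (rows M). orthogonal x y}"
    by (auto simp: right_kernel_def intro: orthogonal_nullspace_rowspace[THEN orthogonal_commute[THEN iffD1]])
next
  fix y assume orth: "y \<in> {y. \<forall>x \<in> span (rows M). orthogonal x y}"
  have "orthogonal (row i M) y" for i
    using orth by (auto simp: rows_def intro: span_base)
  then have "(M *v y) $ i = 0" for i
    by (simp add: orthogonal_def matrix_vector_mul_component row_def)
  then show "y \<in> right_kernel M" by (simp add: right_kernel_def vec_eq_iff)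
qed

lemma dim_right_kernel_add_rank:
  fixes M :: "real^'n^'m"
  shows "dim (right_kernel M) + rank M = CARD('n)"
proof -
  have "dim {y \<in> UNIV. \<forall>x \<in> span (rows M). orthogonal x y} + dim (span (rows M))
      = dim (UNIV :: (real^'n) set)"
    by (rule dim_subspace_orthogonal_to_vectors) (auto simp: subspace_span)
  then show ?thesis
    by (simp add: right_kernel_eq_orthogonal_rows row_rank_def dim_span)
qed

lemma dim_left_kernel_eq_dim_right_kernel:
  fixes M :: "real^'n^'n"
  shows "dim (left_kernel M) = dim (right_kernel M)"
proof -
  have "left_kernel M = right_kernel (transpose M)"
    by (simp add: left_kernel_def right_kernel_def)
  then show ?thesis
    using dim_right_kernel_add_rank[of M] dim_right_kernel_add_rank[of "transpose M"]
    by (simp add: rank_transpose)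
qed

lemma left_kernel_one_minus_iff: "w \<in> left_kernel (mat 1 - M) \<longleftrightarrow> w v* M = (w :: real^'n)"
  by (auto simp: left_kernel_def vector_matrix_mult_diff_rdistrib)

lemma dim_right_kernel_eq_if_bij_betw_left_kernels:
  fixes A :: "real^'m^'m" and B :: "real^'n^'n"
  assumes "linear E" "inj E" "bij_betw E (left_kernel A) (left_kernel B)"
  shows "dim (right_kernel A) = dim (right_kernel B)"
proof -
  have "dim (right_kernel A) = dim (left_kernel A)"
    by (rule dim_left_kernel_eq_dim_right_kernel[symmetric])
  also have "\<dots> = dim (E ` left_kernel A)"
    using assms(1,2) by (intro dim_image_eq[symmetric]) (auto intro: inj_on_subset)
  also have "\<dots> = dim (right_kernel B)"
    using assms(3) by (simp add: bij_betw_def dim_left_kernel_eq_dim_right_kernel)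
  finally show ?thesis .
qed

lemma bij_betw_left_kernels_section:
  fixes J :: "real^('p::finite + 'q::finite)^('p + 'q)" and S :: "real^'p^'p"
    and E :: "real^'p \<Rightarrow> real^('p + 'q)"
  assumes E_Inl: "\<And>v p. E v $ Inl p = v $ p"
    and compress: "\<And>v p. (E v v* J) $ Inl p = (v v* S) $ p"
    and range_J: "\<And>w. w v* J \<in> range E"
  shows "bij_betw E (left_kernel (mat 1 - S)) (left_kernel (mat 1 - J))"
proof -
  have E_eq: "E u = E v \<longleftrightarrow> u = v" for u v
    by (metis E_Inl vec_eq_iff)
  have E_J: "E v v* J = E (v v* S)" for v
  proof -
    obtain u where u: "E v v* J = E u" using range_J by blast
    then have "u $ p = (v v* S) $ p" for p
      by (metis E_Inl compress)
    then have "u = v v* S" by (simp add: vec_eq_iff)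
    with u show ?thesis by simp
  qed
  show ?thesis
  proof (rule bij_betw_imageI)
    show "inj_on E (left_kernel (mat 1 - S))"
      by (simp add: E_eq inj_on_def)
    show "E ` left_kernel (mat 1 - S) = left_kernel (mat 1 - J)"
    proof (intro set_eqI iffI)
      fix w assume "w \<in> E ` left_kernel (mat 1 - S)"
      then show "w \<in> left_kernel (mat 1 - J)"
        by (auto simp: left_kernel_one_minus_iff E_J)
    next
      fix w assume "w \<in> left_kernel (mat 1 - J)"
      then have fixed: "w v* J = w" by (simp add: left_kernel_one_minus_iff)
      then obtain v where w: "w = E v" using range_J[of w] by (metis rangeE)
      then have "v v* S = v" using fixed by (simp add: E_J E_eq)
      with w show "w \<in> E ` left_kernel (mat 1 - S)"
        by (simp add: left_kernel_one_minus_iff)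
    qed
  qed
qed

lemma vector_matrix_mult_Plus_component:
  fixes M :: "'a::comm_semiring_1^'n^('p::finite + 'q::finite)"
  shows "(w v* M) $ j = (\<Sum>p\<in>UNIV. w $ Inl p * M $ Inl p $ j) + (\<Sum>q\<in>UNIV. w $ Inr q * M $ Inr q $ j)"
  by (simp add: vector_matrix_mult_def UNIV_Plus_UNIV[symmetric] sum.Plus mult.commute
      del: UNIV_Plus_UNIV)

lemma sum_snd_marginal_mult:
  "(\<Sum>t\<in>UNIV. (\<Sum>y\<in>UNIV. v (y, t)) * g t) = (\<Sum>p\<in>UNIV. v p * g (snd p) :: 'a::comm_semiring_1)"
proof -
  have "(\<Sum>p\<in>UNIV. v p * g (snd p)) = (\<Sum>y\<in>UNIV. \<Sum>t\<in>UNIV. v (y, t) * g t)"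
    by (simp add: sum.cartesian_product split_def)
  also have "\<dots> = (\<Sum>t\<in>UNIV. (\<Sum>y\<in>UNIV. v (y, t)) * g t)"
    by (subst sum.swap) (simp add: sum_distrib_right)
  finally show ?thesis ..
qed

lemma kron_mult: "kron a b * z = (if a = b then z else (0::real))"
  by (simp add: kron_def)

lemma sum_kron_left: "(\<Sum>t\<in>UNIV. kron t (a::'a::finite) * f t) = (f a :: real)"
  by (simp add: kron_mult)

lemma sum_kron_diff_mult:
  "(\<Sum>t\<in>UNIV. (kron t (a::'a::finite) - c) * f t) = f a - c * (\<Sum>t\<in>UNIV. f t :: real)"
  by (simp add: left_diff_distrib sum_subtractf sum_distrib_left sum_kron_left)

lemma sum_one_minus_kron_mult:
  "(\<Sum>t\<in>UNIV. (1 - kron t (a::'a::finite) / d) * f t) = (\<Sum>t\<in>UNIV. f t) - f a / (d :: real)"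
proof -
  have "(\<Sum>t\<in>UNIV. (1 - kron t a / d) * f t) = (\<Sum>t\<in>UNIV. f t - kron t a * f t / d)"
    by (simp add: algebra_simps)
  then show ?thesis by (simp only: sum_subtractf sum_divide_distrib[symmetric] sum_kron_left)
qed

lemma sum_sum_mult_separable:
  fixes f :: "'a \<Rightarrow> 'r::comm_semiring_1"
  shows "(\<Sum>a\<in>A. \<Sum>b\<in>B. f a * g b * (\<Sum>x\<in>X. h x * u x a * w x b))
       = (\<Sum>x\<in>X. h x * (\<Sum>a\<in>A. f a * u x a) * (\<Sum>b\<in>B. g b * w x b))"
proof -
  have "(\<Sum>a\<in>A. \<Sum>b\<in>B. f a * g b * (\<Sum>x\<in>X. h x * u x a * w x b))
      = (\<Sum>a\<in>A. \<Sum>x\<in>X. \<Sum>b\<in>B. h x * (f a * u x a) * (g b * w x b))"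
    by (subst sum.swap) (simp add: sum_distrib_left mult_ac)
  also have "\<dots> = (\<Sum>x\<in>X. \<Sum>a\<in>A. \<Sum>b\<in>B. h x * (f a * u x a) * (g b * w x b))"
    by (rule sum.swap)
  also have "\<dots> = (\<Sum>x\<in>X. h x * ((\<Sum>a\<in>A. f a * u x a) * (\<Sum>b\<in>B. g b * w x b)))"
    by (simp only: sum_product) (simp add: sum_distrib_left mult.assoc)
  also have "\<dots> = (\<Sum>x\<in>X. h x * (\<Sum>a\<in>A. f a * u x a) * (\<Sum>b\<in>B. g b * w x b))"
    by (simp only: mult.assoc)
  finally show ?thesis .
qed

lemma extend_vec_Inl [simp]: "extend_vec \<beta> v $ Inl p = v $ p"
  by (simp add: extend_vec_def)

lemma extend_vec_Inr [simp]: "extend_vec \<beta> v $ Inr t = (1 - \<beta>) / \<beta> * (\<Sum>y\<in>UNIV. v $ (y, t))"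
  by (simp add: extend_vec_def)

lemma linear_extend_vec: "linear (extend_vec \<beta> :: real^('y::finite \<times> 't::finite) \<Rightarrow> _)"
proof (rule linearI)
  fix v w :: "real^('y \<times> 't)" and c :: real
  show "extend_vec \<beta> (v + w) = extend_vec \<beta> v + extend_vec \<beta> w"
    by (simp add: extend_vec_def vec_eq_iff sum.distrib algebra_simps split: sum.split)
  show "extend_vec \<beta> (c *\<^sub>R v) = c *\<^sub>R extend_vec \<beta> v"
    by (simp add: extend_vec_def vec_eq_iff sum_distrib_left algebra_simps split: sum.split)
qed

lemma inj_extend_vec: "inj (extend_vec \<beta>)"
  by (rule injI) (metis extend_vec_Inl vec_eq_iff)

definition IB_G :: "('x::finite \<Rightarrow> real) \<Rightarrow> ('x \<Rightarrow> 't \<Rightarrow> real) \<Rightarrow> ('t \<Rightarrow> real) \<Rightarrow> 't \<Rightarrow> 't \<Rightarrow> 'x \<Rightarrow> real" where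
  "IB_G px enc marg t t' x = inv_enc px enc marg t x * (kron t t' - enc x t')"

lemma IB_S_entry:
  "IB_S \<beta> pyx px enc dec marg $ (y, t) $ (y', t')
     = (\<Sum>x\<in>UNIV. IB_G px enc marg t t' x * (\<beta> * pyx x y / dec t y + (1 - 2 * \<beta>)) * pyx x y')"
  by (simp add: IB_S_def IB_G_def mult_ac)

lemma sum_IB_G:
  "(\<Sum>x\<in>UNIV. IB_G px enc marg t t' x * h x)
     = kron t t' * (\<Sum>x\<in>UNIV. inv_enc px enc marg t x * h x)
       - (\<Sum>x\<in>UNIV. enc x t' * inv_enc px enc marg t x * h x)"
  by (simp add: IB_G_def sum_distrib_left sum_subtractf algebra_simps)

text \<open>Only these consequences of the root equations enter the computation below.\<close>

context
  fixes pyx :: "'x::finite \<Rightarrow> 'y::finite \<Rightarrow> real" and px :: "'x \<Rightarrow> real"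
    and enc :: "'x \<Rightarrow> 't::finite \<Rightarrow> real" and dec :: "'t \<Rightarrow> 'y \<Rightarrow> real"
    and marg :: "'t \<Rightarrow> real"
  assumes pyx_sum: "\<And>x. (\<Sum>y\<in>UNIV. pyx x y) = 1"
    and enc_sum: "\<And>x. (\<Sum>t\<in>UNIV. enc x t) = 1"
    and inv_enc_sum: "\<And>t. (\<Sum>x\<in>UNIV. inv_enc px enc marg t x) = 1"
    and dec_eq: "\<And>t y. dec t y = (\<Sum>x\<in>UNIV. pyx x y * inv_enc px enc marg t x)"
    and dec_nz: "\<And>t y. dec t y \<noteq> 0"
begin

lemma sum_inv_enc_likelihood_ratio:
  "(\<Sum>x\<in>UNIV. inv_enc px enc marg t x * (pyx x y / dec t y - 1)) = 0"
proof -
  have "(\<Sum>x\<in>UNIV. inv_enc px enc marg t x * (pyx x y / dec t y - 1))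
      = (\<Sum>x\<in>UNIV. pyx x y * inv_enc px enc marg t x) / dec t y - (\<Sum>x\<in>UNIV. inv_enc px enc marg t x)"
    by (simp add: algebra_simps sum_subtractf sum_divide_distrib)
  then show ?thesis using dec_eq[of t y, symmetric] dec_nz[of t y] inv_enc_sum[of t] by simp
qed

lemma IB_J_Inr_Inr:
  "IB_J \<beta> pyx px enc dec marg $ Inr t $ Inr t' = (1 - \<beta>) * (\<Sum>x\<in>UNIV. IB_G px enc marg t t' x)"
  using sum_IB_G[of px enc marg t t' "\<lambda>_. 1"] by (simp add: IB_J_def IB_A_def inv_enc_sum)

lemma IB_J_Inr_Inl:
  "IB_J \<beta> pyx px enc dec marg $ Inr t $ Inl (y', t')
     = \<beta> * (\<Sum>x\<in>UNIV. IB_G px enc marg t t' x * pyx x y')"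
  using sum_IB_G[of px enc marg t t' "\<lambda>x. pyx x y'"]
  by (simp add: IB_J_def IB_B_def dec_eq[of t y'] mult_ac)

lemma IB_J_Inl_Inr:
  "IB_J \<beta> pyx px enc dec marg $ Inl (y, t) $ Inr t'
     = (1 - \<beta>) * (\<Sum>x\<in>UNIV. IB_G px enc marg t t' x * (pyx x y / dec t y - 1))"
proof -
  have "(\<Sum>y''\<in>UNIV. (1 - kron y'' y / dec t y) * IB_B pyx px enc marg t t' y'')
      = (\<Sum>x\<in>UNIV. enc x t' * inv_enc px enc marg t x * (\<Sum>y''\<in>UNIV. (1 - kron y'' y / dec t y) * pyx x y''))"
    unfolding IB_B_def sum_distrib_left by (subst sum.swap) (simp add: mult_ac)
  also have "\<dots> = - (\<Sum>x\<in>UNIV. enc x t' * inv_enc px enc marg t x * (pyx x y / dec t y - 1))"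
    by (simp only: sum_one_minus_kron_mult pyx_sum) (simp add: algebra_simps sum_subtractf)
  finally show ?thesis
    using sum_IB_G[of px enc marg t t' "\<lambda>x. pyx x y / dec t y - 1"]
    by (simp add: IB_J_def sum_inv_enc_likelihood_ratio)
qed

lemma IB_J_Inl_Inl:
  "IB_J \<beta> pyx px enc dec marg $ Inl (y, t) $ Inl (y', t')
     = \<beta> * (\<Sum>x\<in>UNIV. IB_G px enc marg t t' x * (pyx x y / dec t y - 1) * pyx x y')"
proof -
  have C: "IB_C pyx px enc marg t t'' y' y''
      = (\<Sum>x\<in>UNIV. (inv_enc px enc marg t x * pyx x y') * enc x t'' * pyx x y'')" for t'' y''
    by (simp add: IB_C_def mult_ac)
  have "(\<Sum>t''\<in>UNIV. \<Sum>y''\<in>UNIV. (kron t'' t' - kron t t') * (1 - kron y'' y / dec t y)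
          * IB_C pyx px enc marg t t'' y' y'')
      = (\<Sum>x\<in>UNIV. inv_enc px enc marg t x * pyx x y'
          * (\<Sum>t''\<in>UNIV. (kron t'' t' - kron t t') * enc x t'')
          * (\<Sum>y''\<in>UNIV. (1 - kron y'' y / dec t y) * pyx x y''))"
    unfolding C by (rule sum_sum_mult_separable)
  also have "\<dots> = (\<Sum>x\<in>UNIV. IB_G px enc marg t t' x * (pyx x y / dec t y - 1) * pyx x y')"
    by (simp only: sum_kron_diff_mult sum_one_minus_kron_mult enc_sum pyx_sum)
      (simp add: IB_G_def algebra_simps)
  finally show ?thesis by (simp add: IB_J_def)
qed

lemma IB_J_column_relation:
  "\<beta> * IB_J \<beta> pyx px enc dec marg $ r $ Inr t'
     = (1 - \<beta>) * (\<Sum>y'\<in>UNIV. IB_J \<beta> pyx px enc dec marg $ r $ Inl (y', t'))"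
proof -
  have sum_out: "(\<Sum>y'\<in>UNIV. \<beta> * (\<Sum>x\<in>UNIV. f x * pyx x y')) = \<beta> * (\<Sum>x\<in>UNIV. f x)"
    for f :: "'x \<Rightarrow> real"
    by (subst sum_distrib_left[symmetric], subst sum.swap) (simp add: sum_distrib_left[symmetric] pyx_sum)
  show ?thesis
  proof (cases r)
    case (Inl p)
    then show ?thesis
      by (cases p) (simp only: IB_J_Inl_Inl IB_J_Inl_Inr sum_out, simp add: mult_ac)
  next
    case (Inr t)
    then show ?thesis
      by (simp only: IB_J_Inr_Inl IB_J_Inr_Inr sum_out, simp add: mult_ac)
  qed
qed

lemma IB_S_eq_IB_J_row_combination:
  assumes "\<beta> \<noteq> 0"
  shows "IB_S \<beta> pyx px enc dec marg $ p $ q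
     = IB_J \<beta> pyx px enc dec marg $ Inl p $ Inl q
       + (1 - \<beta>) / \<beta> * IB_J \<beta> pyx px enc dec marg $ Inr (snd p) $ Inl q"
proof -
  obtain y t where p: "p = (y, t)" by (cases p)
  obtain y' t' where q: "q = (y', t')" by (cases q)
  let ?G = "IB_G px enc marg t t'"
  have "IB_J \<beta> pyx px enc dec marg $ Inl p $ Inl q
        + (1 - \<beta>) / \<beta> * IB_J \<beta> pyx px enc dec marg $ Inr (snd p) $ Inl q
      = (\<Sum>x\<in>UNIV. \<beta> * (?G x * (pyx x y / dec t y - 1) * pyx x y')
          + (1 - \<beta>) / \<beta> * (\<beta> * (?G x * pyx x y')))"
    by (simp add: p q IB_J_Inl_Inl IB_J_Inr_Inl sum.distrib sum_distrib_left)
  also have "\<dots> = (\<Sum>x\<in>UNIV. ?G x * (\<beta> * pyx x y / dec t y + (1 - 2 * \<beta>)) * pyx x y')"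
    using assms by (intro sum.cong) (simp_all add: field_simps)
  finally show ?thesis by (simp add: p q IB_S_entry)
qed

lemma extend_vec_mult_IB_J_Inl:
  assumes "\<beta> \<noteq> 0"
  shows "(extend_vec \<beta> v v* IB_J \<beta> pyx px enc dec marg) $ Inl q
     = (v v* IB_S \<beta> pyx px enc dec marg) $ q"
proof -
  let ?J = "IB_J \<beta> pyx px enc dec marg" and ?c = "(1 - \<beta>) / \<beta>"
  have "(\<Sum>t\<in>UNIV. extend_vec \<beta> v $ Inr t * ?J $ Inr t $ Inl q)
      = (\<Sum>p\<in>UNIV. v $ p * (?c * ?J $ Inr (snd p) $ Inl q))"
    using sum_snd_marginal_mult[of "\<lambda>p. v $ p" "\<lambda>t. ?c * ?J $ Inr t $ Inl q"] by (simp add: mult_ac)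
  then have "(extend_vec \<beta> v v* ?J) $ Inl q
      = (\<Sum>p\<in>UNIV. v $ p * (?J $ Inl p $ Inl q + ?c * ?J $ Inr (snd p) $ Inl q))"
    by (simp add: vector_matrix_mult_Plus_component sum.distrib distrib_left)
  also have "\<dots> = (v v* IB_S \<beta> pyx px enc dec marg) $ q"
    by (simp add: IB_S_eq_IB_J_row_combination[OF assms] vector_matrix_mult_def mult.commute)
  finally show ?thesis .
qed

lemma IB_J_rows_in_range_extend_vec:
  assumes "\<beta> \<noteq> 0"
  shows "w v* IB_J \<beta> pyx px enc dec marg \<in> range (extend_vec \<beta>)"
proof (rule range_eqI)
  let ?J = "IB_J \<beta> pyx px enc dec marg"
  have Inr: "(w v* ?J) $ Inr t = (1 - \<beta>) / \<beta> * (\<Sum>y\<in>UNIV. (w v* ?J) $ Inl (y, t))" for t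
  proof -
    have "\<beta> * (w v* ?J) $ Inr t = (\<Sum>i\<in>UNIV. w $ i * (\<beta> * ?J $ i $ Inr t))"
      by (simp add: vector_matrix_mult_def sum_distrib_left mult_ac)
    also have "\<dots> = (\<Sum>i\<in>UNIV. w $ i * ((1 - \<beta>) * (\<Sum>y\<in>UNIV. ?J $ i $ Inl (y, t))))"
      by (simp only: IB_J_column_relation)
    also have "\<dots> = (1 - \<beta>) * (\<Sum>y\<in>UNIV. \<Sum>i\<in>UNIV. w $ i * ?J $ i $ Inl (y, t))"
      by (subst sum.swap) (simp add: sum_distrib_left mult.left_commute)
    also have "\<dots> = (1 - \<beta>) * (\<Sum>y\<in>UNIV. (w v* ?J) $ Inl (y, t))"
      by (simp add: vector_matrix_mult_def mult.commute)
    finally show ?thesis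
      using assms by (simp add: field_simps)
  qed
  have "(w v* ?J) $ i = extend_vec \<beta> (\<chi> p. (w v* ?J) $ Inl p) $ i" for i
    by (cases i) (simp_all only: Inr extend_vec_Inl extend_vec_Inr vec_lambda_beta)
  then show "w v* ?J = extend_vec \<beta> (\<chi> p. (w v* ?J) $ Inl p)"
    by (rule vec_eq_iff[THEN iffD2, OF allI])
qed

end

lemma IB_root_enc_sum:
  assumes root: "is_IB_root \<beta> pyx px enc dec marg" and marg_pos: "\<forall>t. marg t > 0"
  shows "(\<Sum>t\<in>UNIV. enc x t) = 1"
proof -
  let ?w = "\<lambda>t. marg t * exp (- \<beta> * KL (pyx x) (dec t))"
  have "IB_Z \<beta> pyx dec marg x = (\<Sum>t\<in>UNIV. ?w t)"
    by (simp add: IB_Z_def)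
  moreover have "(\<Sum>t\<in>UNIV. ?w t) > 0"
    using marg_pos by (intro sum_pos) auto
  moreover have "enc x t = marg t / IB_Z \<beta> pyx dec marg x * exp (- \<beta> * KL (pyx x) (dec t))" for t
    using root unfolding is_IB_root_def by blast
  ultimately show ?thesis
    by (simp add: sum_divide_distrib[symmetric])
qed

lemma IB_root_inv_enc_sum:
  assumes root: "is_IB_root \<beta> pyx px enc dec marg" and "marg t \<noteq> 0"
  shows "(\<Sum>x\<in>UNIV. inv_enc px enc marg t x) = 1"
proof -
  have "marg t = (\<Sum>x\<in>UNIV. enc x t * px x)"
    using root unfolding is_IB_root_def by blast
  with \<open>marg t \<noteq> 0\<close> show ?thesis
    by (simp add: inv_enc_def sum_divide_distrib[symmetric])
qed

theorem lemma1:
  fixes pyx :: "'x::finite \<Rightarrow> 'y::finite \<Rightarrow> real" and px :: "'x \<Rightarrow> real"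
    and enc :: "'x \<Rightarrow> 't::finite \<Rightarrow> real" and dec :: "'t \<Rightarrow> 'y \<Rightarrow> real"
    and marg :: "'t \<Rightarrow> real" and \<beta> :: real
  assumes joint: "is_joint_distribution pyx px"
    and px_pos: "\<forall>x. px x > 0"
    and beta_pos: "\<beta> > 0"
    and root: "is_IB_root \<beta> pyx px enc dec marg"
    and dec_pos: "\<forall>t y. dec t y > 0"
    and marg_pos: "\<forall>t. marg t > 0"
  shows "dim (right_kernel (mat 1 - IB_S \<beta> pyx px enc dec marg))
           = dim (right_kernel (mat 1 - IB_J \<beta> pyx px enc dec marg))
         \<and> bij_betw (extend_vec \<beta>)
             (left_kernel (mat 1 - IB_S \<beta> pyx px enc dec marg))
             (left_kernel (mat 1 - IB_J \<beta> pyx px enc dec marg))"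
proof -
  have pyx_sum: "\<And>x. (\<Sum>y\<in>UNIV. pyx x y) = 1"
    using joint by (simp add: is_joint_distribution_def)
  have enc_sum: "\<And>x. (\<Sum>t\<in>UNIV. enc x t) = 1"
    using root marg_pos by (rule IB_root_enc_sum)
  have inv_enc_sum: "\<And>t. (\<Sum>x\<in>UNIV. inv_enc px enc marg t x) = 1"
    using root marg_pos by (simp add: IB_root_inv_enc_sum less_imp_neq[symmetric])
  have dec_eq: "\<And>t y. dec t y = (\<Sum>x\<in>UNIV. pyx x y * inv_enc px enc marg t x)"
    using root unfolding is_IB_root_def by blast
  have dec_nz: "\<And>t y. dec t y \<noteq> 0"
    using dec_pos by (simp add: less_imp_neq[symmetric])
  note normalized = pyx_sum enc_sum inv_enc_sum dec_eq dec_nz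
  have beta_nz: "\<beta> \<noteq> 0" using beta_pos by simp
  have bij: "bij_betw (extend_vec \<beta>)
      (left_kernel (mat 1 - IB_S \<beta> pyx px enc dec marg))
      (left_kernel (mat 1 - IB_J \<beta> pyx px enc dec marg))"
    by (rule bij_betw_left_kernels_section[OF extend_vec_Inl
          extend_vec_mult_IB_J_Inl[OF normalized beta_nz]
          IB_J_rows_in_range_extend_vec[OF normalized beta_nz]])
  moreover from bij have "dim (right_kernel (mat 1 - IB_S \<beta> pyx px enc dec marg))
      = dim (right_kernel (mat 1 - IB_J \<beta> pyx px enc dec marg))"
    by (rule dim_right_kernel_eq_if_bij_betw_left_kernels[OF linear_extend_vec inj_extend_vec])
  ultimately show ?thesis by simp
qed

end
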